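(* Let $0<\varepsilon_0\le1$. For an expansion with coefficients $a_l$, $h_A\le l\le k_A$, set $a_l=0$ for $l\notin[h_A,k_A]$ (similarly for other letters). The following hold. (i) If $A$ is an $(h_A,k_A,\delta_A,G_A,\varepsilon_A)$-expansion with coefficients $a_l$ and $c\in\mathbb{R}$, then $C=cA$ satisfies $C(\varepsilon)=\sum_{l=h_A}^{k_A}ca_l\varepsilon^l+o_C(\varepsilon)$ with $|o_C(\varepsilon)|\le |c|G_A\varepsilon^{k_A+\delta_A}$ for $0<\varepsilon\le\varepsilon_A$ (i.e. $h_C=h_A,k_C=k_A$, $\delta_C=\delta_A$, $G_C=|c|G_A$, $\varepsilon_C=\varepsilon_A$). (ii) If $A$ is an $(h_A,k_A,\delta_A,G_A,\varepsilon_A)$-expansion with coefficients $a_l$ and $B$ an $(h_B,k_B,\delta_B,G_B,\varepsilon_B)$-expansion with coefficients $b_l$, then $C=A+B$ is an $(h_C,k_C,\delta_C,G_C,\varepsilon_C)$-expansion with $h_C=h_A\wedge h_B$, $k_C=k_A\wedge k_B$, coefficients $c_r=a_r+b_r$, $\delta_C=\delta_A\mathrm{I}(k_A<k_B)+(\delta_A\wedge\delta_B)\mathrm{I}(k_A=k_B)+\delta_B\mathrm{I}(k_B<k_A)\ \ (\ge\delta_A\wedge\delta_B)$, $\varepsilon_C=\varepsilon_A\wedge\varepsilon_B$, and $G_C=G_A\varepsilon_C^{k_A+\delta_A-k_C-\delta_C}+\sum_{k_C<i\le k_A}|a_i|\varepsilon_C^{i-k_C-\delta_C}+G_B\varepsilon_C^{k_B+\delta_B-k_C-\delta_C}+\sum_{k_C<j\le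 k_B}|b_j|\varepsilon_C^{j-k_C-\delta_C}$. (iii) Under the hypotheses of (ii), $C=A\cdot B$ is an $(h_C,k_C,\delta_C,G_C,\varepsilon_C)$-expansion with $h_C=h_A+h_B$, $k_C=(k_A+h_B)\wedge(k_B+h_A)$, coefficients $c_r=\sum_{i+j=r,\,h_A\le i\le k_A,\,h_B\le j\le k_B}a_ib_j$, $\delta_C=\delta_A\mathrm{I}(k_A+h_B<k_B+h_A)+(\delta_A\wedge\delta_B)\mathrm{I}(k_A+h_B=k_B+h_A)+\delta_B\mathrm{I}(k_A+h_B>k_B+h_A)\ (\ge\delta_A\wedge\delta_B)$, $\varepsilon_C=\varepsilon_A\wedge\varepsilon_B$, and $G_C=\sum_{k_C<i+j,\,h_A\le i\le k_A,\,h_B\le j\le k_B}|a_i||b_j|\varepsilon_C^{i+j-k_C-\delta_C}+G_A\sum_{h_B\le j\le k_B}|b_j|\varepsilon_C^{j+k_A+\delta_A-k_C-\delta_C}+G_B\sum_{h_A\le i\le k_A}|a_i|\varepsilon_C^{i+k_B+\delta_B-k_C-\delta_C}+G_AG_B\varepsilon_C^{k_A+k_B+\delta_A+\delta_B-k_C-\delta_C}$. (iv) Let $B$ be a pivotal $(h_B,k_B,\delta_B,G_B,\varepsilon_B)$-expansion with coefficients $b_l$. Put $h_C=-h_B$, $k_C=k_B-2h_B$, $c_{h_C}=b_{h_B}^{-1}$, $c_{h_C+n}=-b_{h_B}^{-1}\sum_{m=1}^n b_{h_B+m}c_{h_C+n-m}$ for $n=1,\dots,k_B-h_B$; $\delta_C=\delta_B$;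 $\tilde\varepsilon_B=\Big(\frac{|b_{h_B}|}{2\big(\sum_{h_B<i\le k_B}|b_i|\varepsilon_B^{i-h_B-\delta_B}+G_B\varepsilon_B^{k_B-h_B}\big)}\Big)^{1/\delta_B}$, $\varepsilon_C=\varepsilon_B\wedge\tilde\varepsilon_B$; $G_C=\big(\tfrac{|b_{h_B}|}{2}\big)^{-1}\Big(\sum_{k_B-h_B<i+j,\,h_B\le i\le k_B,\,h_C\le j\le k_C}|b_i||c_j|\varepsilon_C^{i+j-k_B+h_B-\delta_B}+G_B\sum_{h_C\le j\le k_C}|c_j|\varepsilon_C^{j+h_B}\Big)$. Then there exists $\varepsilon'_0$ with $\varepsilon_C\le\varepsilon'_0\le\varepsilon_0$ such that $B(\varepsilon)\ne0$ for $\varepsilon\in(0,\varepsilon'_0]$, and $C=1/B$ on $(0,\varepsilon'_0]$ is a pivotal $(h_C,k_C,\delta_C,G_C,\varepsilon_C)$-expansion with coefficients $c_l$. (v) Let $A$ be an $(h_A,k_A,\delta_A,G_A,\varepsilon_A)$-expansion with coefficients $a_l$ and $B$ a pivotal $(h_B,k_B,\delta_B,G_B,\varepsilon_B)$-expansion with coefficients $b_l$; let $h_C,k_C,c_l,\delta_C,G_C,\varepsilon_C,\tilde\varepsilon_B$ be as in (iv). Put $h_D=h_A-h_B$, $k_D=(k_A-h_B)\wedge(k_B-2h_B+h_A)$, $d_r=\sum_{i+j=r,\,h_A\le i\le k_A,\,h_C\le j\le k_C}a_ic_j$ for $h_D\le r\le k_D$, and $\delta_D=\delta_A\mathrm{I}(k_A-h_B<k_B-2h_B+h_A)+(\delta_A\wedge\delta_B)\mathrm{I}(k_A-h_B=k_B-2h_B+h_A)+\delta_B\mathrm{I}(k_A-h_B>k_B-2h_B+h_A)\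 (\ge\delta_A\wedge\delta_B)$. Then there exists $\varepsilon'_0$ with $\varepsilon_D\le\varepsilon'_0\le\varepsilon_0$ such that $B(\varepsilon)\ne0$ on $(0,\varepsilon'_0]$ and $D=A/B$ is an $(h_D,k_D,\delta_D,G_D,\varepsilon_D)$-expansion with coefficients $d_r$, where one may take either $\varepsilon_D=\varepsilon_A\wedge\varepsilon_C$ and $G_D=\sum_{k_D<i+j,\,h_A\le i\le k_A,\,h_C\le j\le k_C}|a_i||c_j|\varepsilon_D^{i+j-k_D-\delta_D}+G_A\sum_{h_C\le j\le k_C}|c_j|\varepsilon_D^{j+k_A+\delta_A-k_D-\delta_D}+G_C\sum_{h_A\le i\le k_A}|a_i|\varepsilon_D^{i+k_C+\delta_C-k_D-\delta_D}+G_AG_C\varepsilon_D^{k_A+k_C+\delta_A+\delta_C-k_D-\delta_D}$, or $\varepsilon_D=\varepsilon_A\wedge\varepsilon_B\wedge\tilde\varepsilon_B$ and $G_D=\big(\tfrac{|b_{h_B}|}{2}\big)^{-1}\Big(\sum_{k_A\wedge(h_A+k_B-h_B)<i+j,\,h_B\le i\le k_B,\,h_D\le j\le k_D}|b_i||d_j|\varepsilon_D^{i+j-k_D-h_B-\delta_D}+\sum_{k_A\wedge(h_A+k_B-h_B)<i\le k_A}|a_i|\varepsilon_D^{i-h_B-k_D-\delta_D}+G_A\varepsilon_D^{k_A+\delta_A-h_B-k_D-\delta_D}+G_B\sum_{h_D\le j\le k_D}|d_j|\varepsilon_D^{j+k_B+\delta_B-h_B-k_D-\delta_D}\Big)$.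
   Context: Let $0<\varepsilon_0\le1$. A function $A:(0,\varepsilon_0]\to\mathbb{R}$ (or defined on a smaller interval $(0,\varepsilon'_0]$) is an $(h,k,\delta,G,\varepsilon_A)$-expansion with coefficients $a_h,\dots,a_k$ (integers $h\le k$, reals $a_l$, $\delta\in(0,1]$, $G\in(0,\infty)$, $\varepsilon_A$ in $(0,\varepsilon_0]$ not exceeding the domain endpoint) if the remainder $o_A(\varepsilon):=A(\varepsilon)-\sum_{l=h}^k a_l\varepsilon^l$ satisfies $|o_A(\varepsilon)|\le G\varepsilon^{k+\delta}$ for $0<\varepsilon\le\varepsilon_A$. It is pivotal if $a_h\ne0$. $\mathrm{I}(\cdot)$ denotes the indicator, $\wedge$ the minimum. *)

theory Defs
  imports Complex_Main
begin

text \<open>An (h,k,delta,G,eA)-expansion on a domain (0,e0] with coefficients a.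
  Exponents are integers, so eps^l is written as eps powr of_int l (eps > 0).\<close>
definition is_expansion ::
  "real \<Rightarrow> (real \<Rightarrow> real) \<Rightarrow> int \<Rightarrow> int \<Rightarrow> (int \<Rightarrow> real) \<Rightarrow> real \<Rightarrow> real \<Rightarrow> real \<Rightarrow> bool" where
  "is_expansion e0 A h k a \<delta> G eA \<longleftrightarrow>
     h \<le> k \<and> 0 < \<delta> \<and> \<delta> \<le> 1 \<and> 0 < G \<and> 0 < eA \<and> eA \<le> e0 \<and>
     (\<forall>\<epsilon>. 0 < \<epsilon> \<and> \<epsilon> \<le> eA \<longrightarrow>
        \<bar>A \<epsilon> - (\<Sum>l=h..k. a l * \<epsilon> powr real_of_int l)\<bar> \<le> G * \<epsilon> powr (real_of_int k + \<delta>))"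

definition zext :: "int \<Rightarrow> int \<Rightarrow> (int \<Rightarrow> real) \<Rightarrow> int \<Rightarrow> real" where
  "zext h k a l = (if h \<le> l \<and> l \<le> k then a l else 0)"

text \<open>Coefficients of 1/B: invc b h n = c_{h_C + n} where h = h_B, h_C = -h_B.\<close>
function invc :: "(int \<Rightarrow> real) \<Rightarrow> int \<Rightarrow> nat \<Rightarrow> real" where
  "invc b h n = (if n = 0 then inverse (b h)
      else - inverse (b h) * (\<Sum>m=1..n. b (h + int m) * invc b h (n - m)))"
  by pat_completeness auto
termination by (relation "measure (\<lambda>(b,h,n). n)") auto

end

theory Submission
  imports Defs
begin

text \<open>All five parts are instances of one calculus of explicit bounds
  \<open>|f \<epsilon>| \<le> K \<epsilon>^q\<close> on \<open>(0, E]\<close>: such bounds add and multiply, can be traded for a lower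
  order \<open>q' \<le> q\<close> at the price of a factor \<open>E^(q - q')\<close>, and a finite sum of monomials
  \<open>c\<^sub>i \<epsilon>^p\<^sub>i\<close> with all \<open>p\<^sub>i \<ge> q\<close> is bounded at order \<open>q\<close> with constant
  \<open>\<Sum> |c\<^sub>i| E^(p\<^sub>i - q)\<close>. The remainder of a sum, product, reciprocal or quotient of
  expansions is written as a sum of remainders of the factors, their products with the truncated
  sums, and the monomials beyond the truncation degree; bounding each piece at the target order
  and adding up gives exactly the constants of the statement. For \<open>1/B\<close> and \<open>A/B\<close> one
  divides by \<open>B\<close>, which on \<open>(0, \<epsilon>\<^sub>C]\<close> stays above half its leading term, and the
  recursively defined coefficients \<open>invc\<close> make the truncated product of \<open>B\<close> with its
  reciprocal equal to \<open>1\<close> up to the truncation degree.\<close>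

section \<open>Explicit power bounds\<close>

definition order_bound :: "real \<Rightarrow> real \<Rightarrow> real \<Rightarrow> (real \<Rightarrow> real) \<Rightarrow> bool" where
  "order_bound E K q f \<longleftrightarrow> (\<forall>\<epsilon>. 0 < \<epsilon> \<and> \<epsilon> \<le> E \<longrightarrow> \<bar>f \<epsilon>\<bar> \<le> K * \<epsilon> powr q)"

lemma powr_le_powr_shift:
  fixes x E p q :: real
  assumes "0 < x" "x \<le> E" "q \<le> p"
  shows "x powr p \<le> E powr (p - q) * x powr q"
proof -
  have "x powr p = x powr (p - q) * x powr q" using assms by (simp add: powr_add[symmetric])
  also have "\<dots> \<le> E powr (p - q) * x powr q"
    using assms by (intro mult_right_mono powr_mono2) auto
  finally show ?thesis .
qed

lemma order_bound_mono:
  assumes "order_bound E K q f" "E' \<le> E" "K \<le> K'"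
  shows "order_bound E' K' q f"
  unfolding order_bound_def
proof (intro allI impI)
  fix \<epsilon> :: real assume \<epsilon>: "0 < \<epsilon> \<and> \<epsilon> \<le> E'"
  then have "\<bar>f \<epsilon>\<bar> \<le> K * \<epsilon> powr q" using assms unfolding order_bound_def by auto
  also have "\<dots> \<le> K' * \<epsilon> powr q" using assms(3) by (intro mult_right_mono) auto
  finally show "\<bar>f \<epsilon>\<bar> \<le> K' * \<epsilon> powr q" .
qed

lemma order_bound_cong:
  assumes "order_bound E K q f" "\<And>\<epsilon>. 0 < \<epsilon> \<Longrightarrow> \<epsilon> \<le> E \<Longrightarrow> f \<epsilon> = g \<epsilon>"
  shows "order_bound E K q g"
  using assms unfolding order_bound_def by auto

lemma order_bound_add:
  assumes "order_bound E K q f" "order_bound E L q g"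
  shows "order_bound E (K + L) q (\<lambda>\<epsilon>. f \<epsilon> + g \<epsilon>)"
  using assms unfolding order_bound_def
  by (auto simp: distrib_right intro: order_trans[OF abs_triangle_ineq add_mono])

lemma order_bound_uminus [simp]:
  "order_bound E K q (\<lambda>\<epsilon>. - f \<epsilon>) \<longleftrightarrow> order_bound E K q f"
  unfolding order_bound_def by simp

lemma order_bound_lower:
  assumes "order_bound E K p f" "q \<le> p" "0 \<le> K"
  shows "order_bound E (K * E powr (p - q)) q f"
  unfolding order_bound_def
proof (intro allI impI)
  fix \<epsilon> :: real assume \<epsilon>: "0 < \<epsilon> \<and> \<epsilon> \<le> E"
  then have "\<bar>f \<epsilon>\<bar> \<le> K * \<epsilon> powr p" using assms unfolding order_bound_def by auto
  also have "\<dots> \<le> K * (E powr (p - q) * \<epsilon> powr q)"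
    using \<epsilon> assms by (intro mult_left_mono powr_le_powr_shift) auto
  finally show "\<bar>f \<epsilon>\<bar> \<le> K * E powr (p - q) * \<epsilon> powr q" by (simp add: mult.assoc)
qed

lemma order_bound_mult:
  assumes "order_bound E K p f" "order_bound E L r g" "0 \<le> K"
  shows "order_bound E (K * L) (p + r) (\<lambda>\<epsilon>. f \<epsilon> * g \<epsilon>)"
  unfolding order_bound_def
proof (intro allI impI)
  fix \<epsilon> :: real assume \<epsilon>: "0 < \<epsilon> \<and> \<epsilon> \<le> E"
  then have "\<bar>f \<epsilon>\<bar> \<le> K * \<epsilon> powr p" "\<bar>g \<epsilon>\<bar> \<le> L * \<epsilon> powr r"
    using assms unfolding order_bound_def by auto
  then have "\<bar>f \<epsilon> * g \<epsilon>\<bar> \<le> (K * \<epsilon> powr p) * (L * \<epsilon> powr r)"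
    unfolding abs_mult using assms(3) by (intro mult_mono) auto
  then show "\<bar>f \<epsilon> * g \<epsilon>\<bar> \<le> K * L * \<epsilon> powr (p + r)"
    using \<epsilon> by (simp add: powr_add mult_ac)
qed

lemma order_bound_powr_sum:
  assumes "\<And>i. i \<in> T \<Longrightarrow> q \<le> p i"
  shows "order_bound E (\<Sum>i\<in>T. \<bar>c i\<bar> * E powr (p i - q)) q (\<lambda>\<epsilon>. \<Sum>i\<in>T. c i * \<epsilon> powr p i)"
  unfolding order_bound_def
proof (intro allI impI)
  fix \<epsilon> :: real assume \<epsilon>: "0 < \<epsilon> \<and> \<epsilon> \<le> E"
  have "\<bar>\<Sum>i\<in>T. c i * \<epsilon> powr p i\<bar> \<le> (\<Sum>i\<in>T. \<bar>c i\<bar> * \<epsilon> powr p i)"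
    by (rule order_trans[OF sum_abs]) (simp add: abs_mult)
  also have "\<dots> \<le> (\<Sum>i\<in>T. \<bar>c i\<bar> * (E powr (p i - q) * \<epsilon> powr q))"
    using \<epsilon> assms by (intro sum_mono mult_left_mono powr_le_powr_shift) auto
  finally show "\<bar>\<Sum>i\<in>T. c i * \<epsilon> powr p i\<bar> \<le> (\<Sum>i\<in>T. \<bar>c i\<bar> * E powr (p i - q)) * \<epsilon> powr q"
    by (simp add: sum_distrib_right mult.assoc)
qed

lemma order_bound_mult_powr_sum:
  assumes "order_bound E K r f" "0 \<le> K" "\<And>i. i \<in> T \<Longrightarrow> q \<le> p i + r"
  shows "order_bound E (K * (\<Sum>i\<in>T. \<bar>c i\<bar> * E powr (p i + r - q))) q
           (\<lambda>\<epsilon>. f \<epsilon> * (\<Sum>i\<in>T. c i * \<epsilon> powr p i))"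
  unfolding order_bound_def
proof (intro allI impI)
  fix \<epsilon> :: real assume \<epsilon>: "0 < \<epsilon> \<and> \<epsilon> \<le> E"
  have "\<bar>f \<epsilon> * (\<Sum>i\<in>T. c i * \<epsilon> powr p i)\<bar> \<le> (K * \<epsilon> powr r) * (\<Sum>i\<in>T. \<bar>c i\<bar> * \<epsilon> powr p i)"
    unfolding abs_mult using \<epsilon> assms(1,2) unfolding order_bound_def
    by (intro mult_mono order_trans[OF sum_abs]) (auto simp: abs_mult intro: sum_nonneg)
  also have "\<dots> = K * (\<Sum>i\<in>T. \<bar>c i\<bar> * \<epsilon> powr (p i + r))"
    using \<epsilon> by (simp add: sum_distrib_left sum_distrib_right powr_add mult_ac)
  also have "\<dots> \<le> K * ((\<Sum>i\<in>T. \<bar>c i\<bar> * E powr (p i + r - q)) * \<epsilon> powr q)"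
    using order_bound_powr_sum[of T q "\<lambda>i. p i + r" E "\<lambda>i. \<bar>c i\<bar>"] \<epsilon> assms(2,3)
    unfolding order_bound_def by (intro mult_left_mono) auto
  finally show "\<bar>f \<epsilon> * (\<Sum>i\<in>T. c i * \<epsilon> powr p i)\<bar> \<le> K * (\<Sum>i\<in>T. \<bar>c i\<bar> * E powr (p i + r - q)) * \<epsilon> powr q"
    by (simp add: mult.assoc)
qed

lemma order_bound_conv_tail:
  assumes "\<And>i j. (i, j) \<in> P \<Longrightarrow> q \<le> real_of_int (i + j)"
  shows "order_bound E (\<Sum>(i,j)\<in>P. \<bar>a i\<bar> * \<bar>b j\<bar> * E powr (real_of_int (i + j) - q)) q
           (\<lambda>\<epsilon>. \<Sum>(i,j)\<in>P. a i * b j * \<epsilon> powr real_of_int (i + j))"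
  using order_bound_powr_sum[of P q "\<lambda>(i,j). real_of_int (i + j)" E "\<lambda>(i,j). a i * b j"] assms
  by (simp add: case_prod_beta abs_mult)

lemma order_bound_divide:
  assumes "order_bound E K (q + h) f" "0 < \<beta>" "\<And>\<epsilon>. 0 < \<epsilon> \<Longrightarrow> \<epsilon> \<le> E \<Longrightarrow> \<beta> * \<epsilon> powr h \<le> \<bar>g \<epsilon>\<bar>"
  shows "order_bound E (K / \<beta>) q (\<lambda>\<epsilon>. f \<epsilon> / g \<epsilon>)"
  unfolding order_bound_def
proof (intro allI impI)
  fix \<epsilon> :: real assume \<epsilon>: "0 < \<epsilon> \<and> \<epsilon> \<le> E"
  then have pos: "0 < \<beta> * \<epsilon> powr h" using assms(2) by simp
  have "\<bar>f \<epsilon> / g \<epsilon>\<bar> = \<bar>f \<epsilon>\<bar> / \<bar>g \<epsilon>\<bar>" by simp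
  also have "\<dots> \<le> (K * \<epsilon> powr (q + h)) / (\<beta> * \<epsilon> powr h)"
    using \<epsilon> assms pos unfolding order_bound_def by (intro frac_le) auto
  also have "\<dots> = K / \<beta> * \<epsilon> powr q" using \<epsilon> by (simp add: powr_add)
  finally show "\<bar>f \<epsilon> / g \<epsilon>\<bar> \<le> K / \<beta> * \<epsilon> powr q" .
qed

section \<open>Truncated Laurent sums and their products\<close>

abbreviation laurent :: "int \<Rightarrow> int \<Rightarrow> (int \<Rightarrow> real) \<Rightarrow> real \<Rightarrow> real" where
  "laurent h k a \<epsilon> \<equiv> \<Sum>l=h..k. a l * \<epsilon> powr real_of_int l"

abbreviation conv :: "int set \<Rightarrow> int set \<Rightarrow> (int \<Rightarrow> real) \<Rightarrow> (int \<Rightarrow> real) \<Rightarrow> int \<Rightarrow> real" where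
  "conv I J a b r \<equiv> \<Sum>(i,j)\<in>{(i,j). i \<in> I \<and> j \<in> J \<and> i + j = r}. a i * b j"

lemma laurent_zext_split:
  assumes "h \<le> hA" "h \<le> k + 1"
  shows "laurent hA kA a \<epsilon> = laurent h k (zext hA kA a) \<epsilon> + (\<Sum>l\<in>{k<..kA}. zext hA kA a l * \<epsilon> powr real_of_int l)"
proof -
  let ?f = "\<lambda>l. zext hA kA a l * \<epsilon> powr real_of_int l"
  have "laurent hA kA a \<epsilon> = sum ?f {hA..kA}" by (simp add: zext_def)
  also have "\<dots> = sum ?f {h..max k kA}"
    using assms by (intro sum.mono_neutral_left) (auto simp: zext_def)
  also have "{h..max k kA} = {h..k} \<union> {k<..kA}" using assms by auto
  also have "sum ?f \<dots> = laurent h k (zext hA kA a) \<epsilon> + sum ?f {k<..kA}"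
    by (rule sum.union_disjoint) auto
  finally show ?thesis .
qed

lemma conv_eq_sum:
  assumes "finite I"
  shows "conv I J a b r = (\<Sum>i\<in>I. if r - i \<in> J then a i * b (r - i) else 0)"
proof -
  have image: "{(i,j). i \<in> I \<and> j \<in> J \<and> i + j = r} = (\<lambda>i. (i, r - i)) ` (I \<inter> {i. r - i \<in> J})"
    by auto
  have "inj_on (\<lambda>i. (i, r - i)) (I \<inter> {i. r - i \<in> J})" by (auto simp: inj_on_def)
  then have "conv I J a b r = (\<Sum>i\<in>I \<inter> {i. r - i \<in> J}. a i * b (r - i))"
    by (simp add: image sum.reindex)
  also have "\<dots> = (\<Sum>i\<in>I. if r - i \<in> J then a i * b (r - i) else 0)"
    using sum.inter_restrict[OF assms, of "\<lambda>i. a i * b (r - i)" "{i. r - i \<in> J}"] by simp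
  finally show ?thesis .
qed

lemma laurent_mult_split:
  fixes a b :: "int \<Rightarrow> real"
  assumes "finite I" "finite J" "\<And>i j. i \<in> I \<Longrightarrow> j \<in> J \<Longrightarrow> L \<le> i + j" "0 < x"
  shows "(\<Sum>i\<in>I. a i * x powr real_of_int i) * (\<Sum>j\<in>J. b j * x powr real_of_int j)
    = laurent L K (conv I J a b) x
      + (\<Sum>(i,j)\<in>{(i,j). i \<in> I \<and> j \<in> J \<and> K < i + j}. a i * b j * x powr real_of_int (i + j))"
proof -
  let ?g = "\<lambda>(i,j). a i * b j * x powr real_of_int (i + j)"
  let ?low = "{(i,j). i \<in> I \<and> j \<in> J \<and> i + j \<le> K}" and ?high = "{(i,j). i \<in> I \<and> j \<in> J \<and> K < i + j}"
  have fin: "finite ?low" "finite ?high"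
    by (rule finite_subset[of _ "I \<times> J"], auto simp: assms)+
  have "(\<Sum>i\<in>I. a i * x powr real_of_int i) * (\<Sum>j\<in>J. b j * x powr real_of_int j) = sum ?g (I \<times> J)"
    by (simp add: sum_product sum.cartesian_product powr_add mult_ac)
  also have "I \<times> J = ?low \<union> ?high" by auto
  also have "sum ?g \<dots> = sum ?g ?low + sum ?g ?high"
    by (rule sum.union_disjoint) (use fin in auto)
  also have "sum ?g ?low = (\<Sum>r=L..K. sum ?g {p \<in> ?low. (\<lambda>(i,j). i + j) p = r})"
    by (rule sum.group[symmetric]) (use fin assms in auto)
  also have "\<dots> = laurent L K (conv I J a b) x"
  proof (rule sum.cong[OF refl])
    fix r assume "r \<in> {L..K}"
    then have "{p \<in> ?low. (\<lambda>(i,j). i + j) p = r} = {(i,j). i \<in> I \<and> j \<in> J \<and> i + j = r}" by auto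
    then show "sum ?g {p \<in> ?low. (\<lambda>(i,j). i + j) p = r} = conv I J a b r * x powr real_of_int r"
      by (auto simp: sum_distrib_right case_prod_beta intro!: sum.cong)
  qed
  finally show ?thesis .
qed

section \<open>Coefficients of the reciprocal\<close>

lemma conv_invc_nat:
  assumes "b h \<noteq> 0"
  shows "(\<Sum>m=0..N. b (h + int m) * invc b h (N - m)) = (if N = 0 then 1 else 0)"
proof (cases "N = 0")
  case True
  then show ?thesis using assms by (simp add: invc.simps[of b h 0])
next
  case False
  have rec: "invc b h N = - inverse (b h) * (\<Sum>m=1..N. b (h + int m) * invc b h (N - m))"
    using invc.simps[of b h N] False by (simp del: invc.simps)
  have "(\<Sum>m=0..N. b (h + int m) * invc b h (N - m))
      = b h * invc b h N + (\<Sum>m=Suc 0..N. b (h + int m) * invc b h (N - m))"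
    by (subst sum.atLeast_Suc_atMost) auto
  also have "\<dots> = 0" unfolding rec using assms by (simp add: field_simps)
  finally show ?thesis using False by simp
qed

lemma conv_invc:
  assumes "b h \<noteq> 0" "r \<le> k - h"
  shows "conv {h..k} {- h..k - 2 * h} b (\<lambda>l. invc b h (nat (l - - h))) r = (if r = 0 then 1 else 0)"
proof (cases "r < 0")
  case True
  then show ?thesis by (auto simp: conv_eq_sum intro!: sum.neutral)
next
  case False
  define N where "N = nat r"
  have rN: "r = int N" using False N_def by auto
  have "conv {h..k} {- h..k - 2 * h} b (\<lambda>l. invc b h (nat (l - - h))) r
      = (\<Sum>i\<in>{h..k} \<inter> {i. r - i \<in> {- h..k - 2 * h}}. b i * invc b h (nat (r - i + h)))"
    by (subst conv_eq_sum) (simp_all add: sum.inter_restrict cong: if_cong del: invc.simps)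
  also have "{h..k} \<inter> {i. r - i \<in> {- h..k - 2 * h}} = (\<lambda>m. h + int m) ` {0..N}"
  proof -
    have "x \<in> (\<lambda>m. h + int m) ` {0..N}" if "h \<le> x" "x \<le> r + h" for x
      using that by (intro image_eqI[of _ _ "nat (x - h)"]) (auto simp: rN)
    then show ?thesis using assms(2) by (auto simp: rN)
  qed
  also have "(\<Sum>i\<in>(\<lambda>m. h + int m) ` {0..N}. b i * invc b h (nat (r - i + h)))
     = (\<Sum>m=0..N. b (h + int m) * invc b h (N - m))"
    by (subst sum.reindex) (auto simp: inj_on_def rN nat_diff_distrib intro!: sum.cong)
  also have "\<dots> = (if r = 0 then 1 else 0)" using conv_invc_nat[of b h N, OF assms(1)] by (simp add: rN)
  finally show ?thesis .
qed

text \<open>With \<open>c\<close> the coefficients of \<open>1/B\<close>: \<open>b \<star> (a \<star> c) = a \<star> (b \<star> c)\<close>, and \<open>b \<star> c\<close> is the unit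
  in the degrees \<open>0, \<dots>, kB - hB\<close>.\<close>

lemma conv_conv_invc:
  fixes a b :: "int \<Rightarrow> real"
  assumes bh: "b hB \<noteq> 0" and r: "hA \<le> r" "r \<le> kA" "r \<le> hA + kB - hB" "r \<le> kD + hB"
  shows "conv {hB..kB} {hA - hB..kD} b
           (conv {hA..kA} {- hB..kB - 2 * hB} a (\<lambda>l. invc b hB (nat (l - - hB)))) r = a r"
proof -
  let ?c = "\<lambda>l. invc b hB (nat (l - - hB))" and ?C = "{- hB..kB - 2 * hB}"
  let ?t = "\<lambda>i i'. if r - i - i' \<in> ?C then a i' * (b i * ?c (r - i - i')) else 0"
  have inner: "(if r - i \<in> {hA - hB..kD} then b i * conv {hA..kA} ?C a ?c (r - i) else 0)
      = (\<Sum>i'\<in>{hA..kA}. ?t i i')" if i: "i \<in> {hB..kB}" for i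
  proof (cases "r - i \<in> {hA - hB..kD}")
    case True
    then show ?thesis
      unfolding if_P[OF True] conv_eq_sum[OF finite_atLeastAtMost_int] sum_distrib_left
      by (intro sum.cong) (auto simp del: invc.simps)
  next
    case False
    then have "?t i i' = 0" if "i' \<in> {hA..kA}" for i' using that i r by auto
    then have "(\<Sum>i'\<in>{hA..kA}. ?t i i') = 0" by (intro sum.neutral) blast
    then show ?thesis by (simp only: if_not_P[OF False])
  qed
  have "conv {hB..kB} {hA - hB..kD} b (conv {hA..kA} ?C a ?c) r = (\<Sum>i\<in>{hB..kB}. \<Sum>i'\<in>{hA..kA}. ?t i i')"
    by (subst conv_eq_sum) (auto intro!: sum.cong simp only: inner)
  also have "\<dots> = (\<Sum>i'\<in>{hA..kA}. a i' * conv {hB..kB} ?C b ?c (r - i'))"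
    unfolding conv_eq_sum[OF finite_atLeastAtMost_int] sum_distrib_left
    by (subst sum.swap, intro sum.cong refl) (auto simp: algebra_simps simp del: invc.simps)
  also have "\<dots> = (\<Sum>i'\<in>{hA..kA}. if r = i' then a i' else 0)"
  proof (rule sum.cong[OF refl])
    fix i' assume "i' \<in> {hA..kA}"
    then have "r - i' \<le> kB - hB" using r by simp
    then show "a i' * conv {hB..kB} ?C b ?c (r - i') = (if r = i' then a i' else 0)"
      by (subst conv_invc[of b hB, OF bh]) auto
  qed
  also have "\<dots> = a r" using r by simp
  finally show ?thesis .
qed

lemma laurent_mult_invc:
  assumes "b h \<noteq> 0" "h \<le> k" "0 < \<epsilon>"
  shows "laurent h k b \<epsilon> * laurent (- h) (k - 2 * h) (\<lambda>l. invc b h (nat (l - - h))) \<epsilon>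
    = 1 + (\<Sum>(i,j)\<in>{(i,j). i \<in> {h..k} \<and> j \<in> {- h..k - 2 * h} \<and> k - h < i + j}.
             b i * invc b h (nat (j - - h)) * \<epsilon> powr real_of_int (i + j))"
proof -
  let ?c = "\<lambda>l. invc b h (nat (l - - h))"
  have "laurent h k b \<epsilon> * laurent (- h) (k - 2 * h) ?c \<epsilon>
      = laurent 0 (k - h) (conv {h..k} {- h..k - 2 * h} b ?c) \<epsilon>
        + (\<Sum>(i,j)\<in>{(i,j). i \<in> {h..k} \<and> j \<in> {- h..k - 2 * h} \<and> k - h < i + j}. b i * ?c j * \<epsilon> powr real_of_int (i + j))"
    using assms(3) by (intro laurent_mult_split) auto
  also have "laurent 0 (k - h) (conv {h..k} {- h..k - 2 * h} b ?c) \<epsilon> = (\<Sum>r=0..k - h. if r = 0 then 1 else 0)"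
    using assms(3) by (intro sum.cong refl) (subst conv_invc[of b h, OF assms(1)], auto)
  also have "\<dots> = 1" using assms(2) by simp
  finally show ?thesis .
qed

lemma laurent_mult_conv_invc:
  fixes a b d :: "int \<Rightarrow> real"
  assumes d: "d = conv {hA..kA} {- hB..kB - 2 * hB} a (\<lambda>l. invc b hB (nat (l - - hB)))"
    and bh: "b hB \<noteq> 0" and "0 < \<epsilon>" and m: "hA \<le> m" "m \<le> kA" "m \<le> hA + kB - hB" "m \<le> kD + hB"
  shows "laurent hB kB b \<epsilon> * laurent (hA - hB) kD d \<epsilon>
    = laurent hA m a \<epsilon> + (\<Sum>(i,j)\<in>{(i,j). i \<in> {hB..kB} \<and> j \<in> {hA - hB..kD} \<and> m < i + j}.
                              b i * d j * \<epsilon> powr real_of_int (i + j))"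
proof -
  have "laurent hB kB b \<epsilon> * laurent (hA - hB) kD d \<epsilon>
      = laurent hA m (conv {hB..kB} {hA - hB..kD} b d) \<epsilon>
        + (\<Sum>(i,j)\<in>{(i,j). i \<in> {hB..kB} \<and> j \<in> {hA - hB..kD} \<and> m < i + j}. b i * d j * \<epsilon> powr real_of_int (i + j))"
    using \<open>0 < \<epsilon>\<close> by (intro laurent_mult_split) auto
  also have "laurent hA m (conv {hB..kB} {hA - hB..kD} b d) \<epsilon> = laurent hA m a \<epsilon>"
    unfolding d using m by (intro sum.cong refl) (subst conv_conv_invc[where b = b and hB = hB, OF bh], auto)
  finally show ?thesis .
qed

section \<open>Arithmetic of expansions\<close>

lemma is_expansion_iff_order_bound:
  "is_expansion e0 A h k a \<delta> G E \<longleftrightarrow>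
     h \<le> k \<and> 0 < \<delta> \<and> \<delta> \<le> 1 \<and> 0 < G \<and> 0 < E \<and> E \<le> e0 \<and>
     order_bound E G (real_of_int k + \<delta>) (\<lambda>\<epsilon>. A \<epsilon> - laurent h k a \<epsilon>)"
  by (auto simp: is_expansion_def order_bound_def)

lemma is_expansionD:
  assumes "is_expansion e0 A h k a \<delta> G E"
  shows "h \<le> k" "0 < \<delta>" "\<delta> \<le> 1" "0 < G" "0 < E" "E \<le> e0"
    "order_bound E G (real_of_int k + \<delta>) (\<lambda>\<epsilon>. A \<epsilon> - laurent h k a \<epsilon>)"
  using assms unfolding is_expansion_iff_order_bound by auto

lemma is_expansionI:
  assumes "order_bound E K (real_of_int k + \<delta>) R" "K \<le> G"
    and "\<And>\<epsilon>. 0 < \<epsilon> \<Longrightarrow> \<epsilon> \<le> E \<Longrightarrow> R \<epsilon> = F \<epsilon> - laurent h k c \<epsilon>"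
    and "h \<le> k" "0 < \<delta>" "\<delta> \<le> 1" "0 < G" "0 < E" "E \<le> e0"
  shows "is_expansion e0 F h k c \<delta> G E"
  unfolding is_expansion_iff_order_bound
  using assms order_bound_cong[OF order_bound_mono[OF assms(1) order_refl assms(2)]] by auto

lemma is_expansion_mono_domain:
  "is_expansion e0 A h k a \<delta> G E \<Longrightarrow> E \<le> e0' \<Longrightarrow> is_expansion e0' A h k a \<delta> G E"
  unfolding is_expansion_def by auto

lemma combined_precision:
  fixes x y :: int
  assumes "0 < \<delta>A" "\<delta>A \<le> 1" "0 < \<delta>B" "\<delta>B \<le> 1"
    and "\<delta> = (if x < y then \<delta>A else if x = y then min \<delta>A \<delta>B else \<delta>B)"
  shows "0 < \<delta>" "\<delta> \<le> 1"
    "real_of_int (min x y) + \<delta> \<le> real_of_int x + \<delta>A"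
    "real_of_int (min x y) + \<delta> \<le> real_of_int y + \<delta>B"
proof -
  have "x < y \<Longrightarrow> real_of_int x + 1 \<le> real_of_int y" "y < x \<Longrightarrow> real_of_int y + 1 \<le> real_of_int x"
    by linarith+
  then show "0 < \<delta>" "\<delta> \<le> 1" "real_of_int (min x y) + \<delta> \<le> real_of_int x + \<delta>A"
    "real_of_int (min x y) + \<delta> \<le> real_of_int y + \<delta>B"
    using assms by (auto simp: min_def)
qed

lemma expansion_scale_remainder:
  assumes "is_expansion e0 A h k a \<delta> G E" "0 < \<epsilon>" "\<epsilon> \<le> E"
  shows "\<bar>c * A \<epsilon> - (\<Sum>l=h..k. c * a l * \<epsilon> powr real_of_int l)\<bar> \<le> \<bar>c\<bar> * G * \<epsilon> powr (real_of_int k + \<delta>)"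
proof -
  have "\<bar>c * A \<epsilon> - (\<Sum>l=h..k. c * a l * \<epsilon> powr real_of_int l)\<bar> = \<bar>c\<bar> * \<bar>A \<epsilon> - laurent h k a \<epsilon>\<bar>"
    by (simp add: sum_distrib_left right_diff_distrib mult.assoc flip: abs_mult)
  also have "\<dots> \<le> \<bar>c\<bar> * (G * \<epsilon> powr (real_of_int k + \<delta>))"
    using is_expansionD(7)[OF assms(1)] assms(2,3) unfolding order_bound_def by (auto intro: mult_left_mono)
  finally show ?thesis by (simp add: mult.assoc)
qed

lemma is_expansion_add:
  assumes A: "is_expansion e0 A hA kA a \<delta>A GA \<epsilon>A" and B: "is_expansion e0 B hB kB b \<delta>B GB \<epsilon>B"
    and hC: "hC = min hA hB" and kC: "kC = min kA kB"
    and \<delta>C: "\<delta>C = (if kA < kB then \<delta>A else if kA = kB then min \<delta>A \<delta>B else \<delta>B)"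
    and \<epsilon>C: "\<epsilon>C = min \<epsilon>A \<epsilon>B"
  defines "GC \<equiv> GA * \<epsilon>C powr (real_of_int kA + \<delta>A - real_of_int kC - \<delta>C)
             + (\<Sum>i\<in>{kC<..kA}. \<bar>a i\<bar> * \<epsilon>C powr (real_of_int (i - kC) - \<delta>C))
             + GB * \<epsilon>C powr (real_of_int kB + \<delta>B - real_of_int kC - \<delta>C)
             + (\<Sum>j\<in>{kC<..kB}. \<bar>b j\<bar> * \<epsilon>C powr (real_of_int (j - kC) - \<delta>C))"
  shows "is_expansion e0 (\<lambda>\<epsilon>. A \<epsilon> + B \<epsilon>) hC kC (\<lambda>r. zext hA kA a r + zext hB kB b r) \<delta>C GC \<epsilon>C"
proof -
  note a = is_expansionD[OF A] and b = is_expansionD[OF B]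
  note prec = combined_precision[OF a(2,3) b(2,3) \<delta>C, folded kC]
  let ?q = "real_of_int kC + \<delta>C"
  let ?K = "GA * \<epsilon>C powr (real_of_int kA + \<delta>A - ?q)
        + (\<Sum>l\<in>{kC<..kA}. \<bar>zext hA kA a l\<bar> * \<epsilon>C powr (real_of_int l - ?q))
        + GB * \<epsilon>C powr (real_of_int kB + \<delta>B - ?q)
        + (\<Sum>l\<in>{kC<..kB}. \<bar>zext hB kB b l\<bar> * \<epsilon>C powr (real_of_int l - ?q))"
  have \<epsilon>C_le: "0 < \<epsilon>C" "\<epsilon>C \<le> \<epsilon>A" "\<epsilon>C \<le> \<epsilon>B" using a b by (auto simp: \<epsilon>C)
  have tail: "order_bound \<epsilon>C (\<Sum>l\<in>{kC<..k}. \<bar>zext h k c l\<bar> * \<epsilon>C powr (real_of_int l - ?q)) ?q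
      (\<lambda>\<epsilon>. \<Sum>l\<in>{kC<..k}. zext h k c l * \<epsilon> powr real_of_int l)" for h k c
    using prec(2) by (intro order_bound_powr_sum) auto
  have rem: "order_bound \<epsilon>C ?K ?q
      (\<lambda>\<epsilon>. (A \<epsilon> - laurent hA kA a \<epsilon>) + (\<Sum>l\<in>{kC<..kA}. zext hA kA a l * \<epsilon> powr real_of_int l)
          + (B \<epsilon> - laurent hB kB b \<epsilon>) + (\<Sum>l\<in>{kC<..kB}. zext hB kB b l * \<epsilon> powr real_of_int l))"
    using a b prec \<epsilon>C_le
    by (intro order_bound_add tail order_bound_lower order_bound_mono[OF a(7)] order_bound_mono[OF b(7)]) auto
  show ?thesis
  proof (rule is_expansionI[OF rem])
    show "?K \<le> GC" unfolding GC_def by (intro add_mono sum_mono) (auto simp: zext_def diff_diff_eq)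
  next
    fix \<epsilon> :: real
    have "hC \<le> hA" "hC \<le> hB" "hC \<le> kC + 1" using a(1) b(1) by (auto simp: hC kC)
    then have "laurent hA kA a \<epsilon> = laurent hC kC (zext hA kA a) \<epsilon>
          + (\<Sum>l\<in>{kC<..kA}. zext hA kA a l * \<epsilon> powr real_of_int l)"
        "laurent hB kB b \<epsilon> = laurent hC kC (zext hB kB b) \<epsilon>
          + (\<Sum>l\<in>{kC<..kB}. zext hB kB b l * \<epsilon> powr real_of_int l)"
      by (simp_all add: laurent_zext_split)
    then show "(A \<epsilon> - laurent hA kA a \<epsilon>) + (\<Sum>l\<in>{kC<..kA}. zext hA kA a l * \<epsilon> powr real_of_int l)
          + (B \<epsilon> - laurent hB kB b \<epsilon>) + (\<Sum>l\<in>{kC<..kB}. zext hB kB b l * \<epsilon> powr real_of_int l)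
        = A \<epsilon> + B \<epsilon> - laurent hC kC (\<lambda>r. zext hA kA a r + zext hB kB b r) \<epsilon>"
      by (simp add: distrib_right sum.distrib)
  next
    show "0 < GC" unfolding GC_def using a(4) b(4) \<epsilon>C_le(1)
      by (intro add_pos_nonneg sum_nonneg mult_pos_pos mult_nonneg_nonneg) (auto intro: less_imp_le)
  qed (use a b prec \<epsilon>C_le in \<open>auto simp: hC kC \<epsilon>C\<close>)
qed

lemma is_expansion_mult:
  assumes A: "is_expansion e0 A hA kA a \<delta>A GA \<epsilon>A" and B: "is_expansion e0 B hB kB b \<delta>B GB \<epsilon>B"
    and hC: "hC = hA + hB" and kC: "kC = min (kA + hB) (kB + hA)"
    and \<delta>C: "\<delta>C = (if kA + hB < kB + hA then \<delta>A else if kA + hB = kB + hA then min \<delta>A \<delta>B else \<delta>B)"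
    and \<epsilon>C: "\<epsilon>C = min \<epsilon>A \<epsilon>B"
  defines "GC \<equiv> (\<Sum>(i,j)\<in>{(i,j). i \<in> {hA..kA} \<and> j \<in> {hB..kB} \<and> kC < i + j}.
                   \<bar>a i\<bar> * \<bar>b j\<bar> * \<epsilon>C powr (real_of_int (i + j - kC) - \<delta>C))
             + GA * (\<Sum>j=hB..kB. \<bar>b j\<bar> * \<epsilon>C powr (real_of_int (j + kA - kC) + \<delta>A - \<delta>C))
             + GB * (\<Sum>i=hA..kA. \<bar>a i\<bar> * \<epsilon>C powr (real_of_int (i + kB - kC) + \<delta>B - \<delta>C))
             + GA * GB * \<epsilon>C powr (real_of_int (kA + kB - kC) + \<delta>A + \<delta>B - \<delta>C)"
  shows "is_expansion e0 (\<lambda>\<epsilon>. A \<epsilon> * B \<epsilon>) hC kC (conv {hA..kA} {hB..kB} a b) \<delta>C GC \<epsilon>C"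
proof -
  note a = is_expansionD[OF A] and b = is_expansionD[OF B]
  let ?q = "real_of_int kC + \<delta>C"
  let ?P = "{(i,j). i \<in> {hA..kA} \<and> j \<in> {hB..kB} \<and> kC < i + j}"
  note prec = combined_precision[OF a(2,3) b(2,3) \<delta>C, folded kC]
  have \<epsilon>C_le: "0 < \<epsilon>C" "\<epsilon>C \<le> \<epsilon>A" "\<epsilon>C \<le> \<epsilon>B" using a b by (auto simp: \<epsilon>C)
  have oA: "order_bound \<epsilon>C GA (real_of_int kA + \<delta>A) (\<lambda>\<epsilon>. A \<epsilon> - laurent hA kA a \<epsilon>)"
    and oB: "order_bound \<epsilon>C GB (real_of_int kB + \<delta>B) (\<lambda>\<epsilon>. B \<epsilon> - laurent hB kB b \<epsilon>)"
    using a(7) b(7) \<epsilon>C_le by (auto intro: order_bound_mono)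
  let ?K = "(\<Sum>(i,j)\<in>?P. \<bar>a i\<bar> * \<bar>b j\<bar> * \<epsilon>C powr (real_of_int (i + j) - ?q))
         + GA * (\<Sum>j=hB..kB. \<bar>b j\<bar> * \<epsilon>C powr (real_of_int j + (real_of_int kA + \<delta>A) - ?q))
         + GB * (\<Sum>i=hA..kA. \<bar>a i\<bar> * \<epsilon>C powr (real_of_int i + (real_of_int kB + \<delta>B) - ?q))
         + GA * GB * \<epsilon>C powr (real_of_int kA + \<delta>A + (real_of_int kB + \<delta>B) - ?q)"
  have rem: "order_bound \<epsilon>C ?K ?q
      (\<lambda>\<epsilon>. (\<Sum>(i,j)\<in>?P. a i * b j * \<epsilon> powr real_of_int (i + j))
          + (A \<epsilon> - laurent hA kA a \<epsilon>) * laurent hB kB b \<epsilon>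
          + (B \<epsilon> - laurent hB kB b \<epsilon>) * laurent hA kA a \<epsilon>
          + (A \<epsilon> - laurent hA kA a \<epsilon>) * (B \<epsilon> - laurent hB kB b \<epsilon>))"
  proof (intro order_bound_add order_bound_conv_tail order_bound_mult_powr_sum[OF oA]
      order_bound_mult_powr_sum[OF oB] order_bound_lower[OF order_bound_mult[OF oA oB]])
    show "?q \<le> real_of_int (i + j)" if "(i, j) \<in> ?P" for i j
      using that prec(2) by (auto simp del: of_int_add)
  qed (use prec a b in \<open>auto simp: kC\<close>)
  show ?thesis
  proof (rule is_expansionI[OF rem])
    show "?K \<le> GC" unfolding GC_def by (simp add: algebra_simps)
  next
    fix \<epsilon> :: real assume "0 < \<epsilon>"
    then have "laurent hA kA a \<epsilon> * laurent hB kB b \<epsilon>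
        = laurent hC kC (conv {hA..kA} {hB..kB} a b) \<epsilon> + (\<Sum>(i,j)\<in>?P. a i * b j * \<epsilon> powr real_of_int (i + j))"
      unfolding hC by (intro laurent_mult_split) auto
    then show "(\<Sum>(i,j)\<in>?P. a i * b j * \<epsilon> powr real_of_int (i + j))
          + (A \<epsilon> - laurent hA kA a \<epsilon>) * laurent hB kB b \<epsilon>
          + (B \<epsilon> - laurent hB kB b \<epsilon>) * laurent hA kA a \<epsilon>
          + (A \<epsilon> - laurent hA kA a \<epsilon>) * (B \<epsilon> - laurent hB kB b \<epsilon>)
        = A \<epsilon> * B \<epsilon> - laurent hC kC (conv {hA..kA} {hB..kB} a b) \<epsilon>"
      by (simp add: algebra_simps)
  next
    show "0 < GC" unfolding GC_def using a(4) b(4) \<epsilon>C_le(1)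
      by (intro add_nonneg_pos add_nonneg_nonneg sum_nonneg mult_pos_pos mult_nonneg_nonneg)
        (auto split: prod.split)
  qed (use a b prec \<epsilon>C_le in \<open>auto simp: hC kC \<epsilon>C\<close>)
qed

lemma expansion_leading_term:
  assumes B: "is_expansion e0 B h k b \<delta> G E"
  shows "order_bound E ((\<Sum>i\<in>{h<..k}. \<bar>b i\<bar> * E powr (real_of_int (i - h) - \<delta>)) + G * E powr real_of_int (k - h))
           (real_of_int h + \<delta>) (\<lambda>\<epsilon>. B \<epsilon> - b h * \<epsilon> powr real_of_int h)"
proof -
  note b = is_expansionD[OF B]
  have split: "laurent h k b \<epsilon> = b h * \<epsilon> powr real_of_int h + (\<Sum>i\<in>{h<..k}. b i * \<epsilon> powr real_of_int i)" for \<epsilon>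
  proof -
    have "{h..k} = insert h {h<..k}" using b(1) by auto
    then show ?thesis by simp
  qed
  have "order_bound E (G * E powr (real_of_int k + \<delta> - (real_of_int h + \<delta>))
      + (\<Sum>i\<in>{h<..k}. \<bar>b i\<bar> * E powr (real_of_int i - (real_of_int h + \<delta>)))) (real_of_int h + \<delta>)
      (\<lambda>\<epsilon>. (B \<epsilon> - laurent h k b \<epsilon>) + (\<Sum>i\<in>{h<..k}. b i * \<epsilon> powr real_of_int i))"
    using b by (intro order_bound_add order_bound_lower[OF b(7)] order_bound_powr_sum) auto
  then show ?thesis
    by (rule order_bound_cong[OF order_bound_mono]) (auto simp: split algebra_simps)
qed

text \<open>The radius \<open>et\<close> is chosen so that the terms of \<open>B\<close> beyond the leading one are at most
  half of it.\<close>

lemma expansion_lower_bound: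
  assumes B: "is_expansion e0 B h k b \<delta> G E" and bh: "b h \<noteq> 0"
  defines "S \<equiv> (\<Sum>i\<in>{h<..k}. \<bar>b i\<bar> * E powr (real_of_int (i - h) - \<delta>)) + G * E powr real_of_int (k - h)"
  defines "et \<equiv> (\<bar>b h\<bar> / (2 * S)) powr (1 / \<delta>)"
  shows "0 < et"
    and "\<And>\<epsilon>. 0 < \<epsilon> \<Longrightarrow> \<epsilon> \<le> E \<Longrightarrow> \<epsilon> \<le> et \<Longrightarrow> \<bar>b h\<bar> / 2 * \<epsilon> powr real_of_int h \<le> \<bar>B \<epsilon>\<bar>"
    and "\<And>\<epsilon>. 0 < \<epsilon> \<Longrightarrow> \<epsilon> \<le> E \<Longrightarrow> \<epsilon> \<le> et \<Longrightarrow> B \<epsilon> \<noteq> 0"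
proof -
  note b = is_expansionD[OF B]
  have S: "0 < S" unfolding S_def using b by (intro add_nonneg_pos sum_nonneg) auto
  then show "0 < et" unfolding et_def using bh by simp
  show low: "\<bar>b h\<bar> / 2 * \<epsilon> powr real_of_int h \<le> \<bar>B \<epsilon>\<bar>" if \<epsilon>: "0 < \<epsilon>" "\<epsilon> \<le> E" "\<epsilon> \<le> et" for \<epsilon>
  proof -
    have "S * \<epsilon> powr \<delta> \<le> S * et powr \<delta>" using \<epsilon> b S by (intro mult_left_mono powr_mono2) auto
    also have "\<dots> = \<bar>b h\<bar> / 2" unfolding et_def using S bh b by (simp add: powr_powr)
    finally have small: "S * \<epsilon> powr \<delta> \<le> \<bar>b h\<bar> / 2" .
    have "\<bar>B \<epsilon> - b h * \<epsilon> powr real_of_int h\<bar> \<le> S * \<epsilon> powr (real_of_int h + \<delta>)"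
      using expansion_leading_term[OF B, folded S_def] \<epsilon> unfolding order_bound_def by auto
    also have "\<dots> = (S * \<epsilon> powr \<delta>) * \<epsilon> powr real_of_int h" using \<epsilon> by (simp add: powr_add mult_ac)
    also have "\<dots> \<le> \<bar>b h\<bar> / 2 * \<epsilon> powr real_of_int h" using small by (intro mult_right_mono) auto
    finally show ?thesis
      using abs_triangle_ineq2[of "b h * \<epsilon> powr real_of_int h" "B \<epsilon>"] by (simp add: abs_mult abs_minus_commute)
  qed
  then show "B \<epsilon> \<noteq> 0" if "0 < \<epsilon>" "\<epsilon> \<le> E" "\<epsilon> \<le> et" for \<epsilon>
    using that bh by (fastforce simp: mult_le_0_iff)
qed

lemma is_expansion_inverse:
  assumes B: "is_expansion e0 B hB kB b \<delta>B GB \<epsilon>B" and bh: "b hB \<noteq> 0"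
  defines "c \<equiv> \<lambda>l. invc b hB (nat (l - - hB))"
    and "et \<equiv> (\<bar>b hB\<bar> / (2 * ((\<Sum>i\<in>{hB<..kB}. \<bar>b i\<bar> * \<epsilon>B powr (real_of_int (i - hB) - \<delta>B))
                               + GB * \<epsilon>B powr real_of_int (kB - hB)))) powr (1 / \<delta>B)"
  defines "\<epsilon>C \<equiv> min \<epsilon>B et"
  defines "GC \<equiv> inverse (\<bar>b hB\<bar> / 2) *
               ((\<Sum>(i,j)\<in>{(i,j). i \<in> {hB..kB} \<and> j \<in> {- hB..kB - 2 * hB} \<and> kB - hB < i + j}.
                   \<bar>b i\<bar> * \<bar>c j\<bar> * \<epsilon>C powr (real_of_int (i + j - kB + hB) - \<delta>B))
                + GB * (\<Sum>j = - hB..kB - 2 * hB. \<bar>c j\<bar> * \<epsilon>C powr real_of_int (j + hB)))"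
  shows "is_expansion \<epsilon>C (\<lambda>\<epsilon>. 1 / B \<epsilon>) (- hB) (kB - 2 * hB) c \<delta>B GC \<epsilon>C"
    and "c (- hB) \<noteq> 0" and "\<epsilon>C \<le> e0"
    and "\<And>\<epsilon>. 0 < \<epsilon> \<Longrightarrow> \<epsilon> \<le> \<epsilon>C \<Longrightarrow> B \<epsilon> \<noteq> 0"
proof -
  note b = is_expansionD[OF B]
  note lb = expansion_lower_bound[OF B bh, folded et_def]
  have \<epsilon>C: "0 < \<epsilon>C" "\<epsilon>C \<le> \<epsilon>B" using b lb(1) by (auto simp: \<epsilon>C_def)
  then show "\<epsilon>C \<le> e0" using b by simp
  have low: "\<bar>b hB\<bar> / 2 * \<epsilon> powr real_of_int hB \<le> \<bar>B \<epsilon>\<bar>" if "0 < \<epsilon>" "\<epsilon> \<le> \<epsilon>C" for \<epsilon>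
    using lb(2) that by (simp add: \<epsilon>C_def)
  show nz: "B \<epsilon> \<noteq> 0" if "0 < \<epsilon>" "\<epsilon> \<le> \<epsilon>C" for \<epsilon>
    using lb(3) that by (simp add: \<epsilon>C_def)
  show c0: "c (- hB) \<noteq> 0" unfolding c_def using bh by simp
  let ?q = "real_of_int (kB - 2 * hB) + \<delta>B"
  let ?C = "{- hB..kB - 2 * hB}"
  let ?P = "{(i,j). i \<in> {hB..kB} \<and> j \<in> ?C \<and> kB - hB < i + j}"
  let ?K = "(\<Sum>(i,j)\<in>?P. \<bar>b i\<bar> * \<bar>c j\<bar> * \<epsilon>C powr (real_of_int (i + j) - (?q + real_of_int hB)))
      + GB * (\<Sum>j\<in>?C. \<bar>c j\<bar> * \<epsilon>C powr (real_of_int j + (real_of_int kB + \<delta>B) - (?q + real_of_int hB)))"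
  \<comment> \<open>\<open>1/B - C = -N/B\<close>: the truncated product of \<open>B\<close> and \<open>C\<close> is \<open>1\<close> plus its terms of degree
    above \<open>kB - hB\<close>\<close>
  let ?N = "\<lambda>\<epsilon>. (\<Sum>(i,j)\<in>?P. b i * c j * \<epsilon> powr real_of_int (i + j))
      + (B \<epsilon> - laurent hB kB b \<epsilon>) * laurent (- hB) (kB - 2 * hB) c \<epsilon>"
  have oB: "order_bound \<epsilon>C GB (real_of_int kB + \<delta>B) (\<lambda>\<epsilon>. B \<epsilon> - laurent hB kB b \<epsilon>)"
    by (rule order_bound_mono[OF b(7)]) (use \<epsilon>C in auto)
  have "order_bound \<epsilon>C ?K (?q + real_of_int hB) (\<lambda>\<epsilon>. - ?N \<epsilon>)"
    unfolding order_bound_uminus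
    using b by (intro order_bound_add order_bound_conv_tail order_bound_mult_powr_sum[OF oB]) auto
  then have quot: "order_bound \<epsilon>C (?K / (\<bar>b hB\<bar> / 2)) ?q (\<lambda>\<epsilon>. - ?N \<epsilon> / B \<epsilon>)"
    by (rule order_bound_divide) (use bh low in auto)
  show "is_expansion \<epsilon>C (\<lambda>\<epsilon>. 1 / B \<epsilon>) (- hB) (kB - 2 * hB) c \<delta>B GC \<epsilon>C"
  proof (rule is_expansionI[OF quot])
    show "?K / (\<bar>b hB\<bar> / 2) \<le> GC" unfolding GC_def divide_inverse_commute
      by (intro mult_left_mono order_eq_refl) (simp_all add: algebra_simps)
  next
    fix \<epsilon> :: real assume \<epsilon>: "0 < \<epsilon>" "\<epsilon> \<le> \<epsilon>C"
    have "laurent hB kB b \<epsilon> * laurent (- hB) (kB - 2 * hB) c \<epsilon>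
        = 1 + (\<Sum>(i,j)\<in>?P. b i * c j * \<epsilon> powr real_of_int (i + j))"
      unfolding c_def using bh b(1) \<epsilon>(1) by (rule laurent_mult_invc)
    with nz[OF \<epsilon>] show "- ?N \<epsilon> / B \<epsilon> = 1 / B \<epsilon> - laurent (- hB) (kB - 2 * hB) c \<epsilon>"
      by (simp add: field_simps)
  next
    have "0 < \<bar>c (- hB)\<bar> * \<epsilon>C powr real_of_int (- hB + hB)" using c0 \<epsilon>C by simp
    also have "\<dots> \<le> (\<Sum>j = - hB..kB - 2 * hB. \<bar>c j\<bar> * \<epsilon>C powr real_of_int (j + hB))"
      by (rule member_le_sum) (use b in auto)
    finally show "0 < GC" unfolding GC_def using bh b
      by (intro mult_pos_pos add_nonneg_pos sum_nonneg) (auto split: prod.split)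
  qed (use b \<epsilon>C in auto)
qed

lemma is_expansion_divide_via_inverse:
  assumes A: "is_expansion e0 A hA kA a \<delta>A GA \<epsilon>A"
    and B: "is_expansion e0 B hB kB b \<delta>B GB \<epsilon>B" and bh: "b hB \<noteq> 0"
  defines "c \<equiv> \<lambda>l. invc b hB (nat (l - - hB))"
    and "et \<equiv> (\<bar>b hB\<bar> / (2 * ((\<Sum>i\<in>{hB<..kB}. \<bar>b i\<bar> * \<epsilon>B powr (real_of_int (i - hB) - \<delta>B))
                               + GB * \<epsilon>B powr real_of_int (kB - hB)))) powr (1 / \<delta>B)"
    and "kD \<equiv> min (kA - hB) (kB - 2 * hB + hA)"
    and "\<delta>D \<equiv> if kA - hB < kB - 2 * hB + hA then \<delta>A
               else if kA - hB = kB - 2 * hB + hA then min \<delta>A \<delta>B else \<delta>B"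
  defines "\<epsilon>C \<equiv> min \<epsilon>B et"
  defines "GC \<equiv> inverse (\<bar>b hB\<bar> / 2) *
               ((\<Sum>(i,j)\<in>{(i,j). i \<in> {hB..kB} \<and> j \<in> {- hB..kB - 2 * hB} \<and> kB - hB < i + j}.
                   \<bar>b i\<bar> * \<bar>c j\<bar> * \<epsilon>C powr (real_of_int (i + j - kB + hB) - \<delta>B))
                + GB * (\<Sum>j = - hB..kB - 2 * hB. \<bar>c j\<bar> * \<epsilon>C powr real_of_int (j + hB)))"
    and "\<epsilon>D \<equiv> min \<epsilon>A \<epsilon>C"
  defines "GD \<equiv> (\<Sum>(i,j)\<in>{(i,j). i \<in> {hA..kA} \<and> j \<in> {- hB..kB - 2 * hB} \<and> kD < i + j}.
                   \<bar>a i\<bar> * \<bar>c j\<bar> * \<epsilon>D powr (real_of_int (i + j - kD) - \<delta>D))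
             + GA * (\<Sum>j = - hB..kB - 2 * hB. \<bar>c j\<bar> * \<epsilon>D powr (real_of_int (j + kA - kD) + \<delta>A - \<delta>D))
             + GC * (\<Sum>i=hA..kA. \<bar>a i\<bar> * \<epsilon>D powr (real_of_int (i + (kB - 2 * hB) - kD) + \<delta>B - \<delta>D))
             + GA * GC * \<epsilon>D powr (real_of_int (kA + (kB - 2 * hB) - kD) + \<delta>A + \<delta>B - \<delta>D)"
  shows "is_expansion \<epsilon>D (\<lambda>\<epsilon>. A \<epsilon> / B \<epsilon>) (hA - hB) kD (conv {hA..kA} {- hB..kB - 2 * hB} a c) \<delta>D GD \<epsilon>D"
    and "\<epsilon>D \<le> e0" and "\<And>\<epsilon>. 0 < \<epsilon> \<Longrightarrow> \<epsilon> \<le> \<epsilon>D \<Longrightarrow> B \<epsilon> \<noteq> 0"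
proof -
  note inv = is_expansion_inverse[OF B bh, folded et_def \<epsilon>C_def]
  have C: "is_expansion e0 (\<lambda>\<epsilon>. 1 / B \<epsilon>) (- hB) (kB - 2 * hB) c \<delta>B GC \<epsilon>C"
    using is_expansion_mono_domain[OF inv(1) inv(3)] by (simp add: GC_def c_def)
  \<comment> \<open>\<open>GD\<close> is precisely the constant of the product rule for \<open>A \<cdot> (1/B)\<close>\<close>
  have "is_expansion e0 (\<lambda>\<epsilon>. A \<epsilon> * (1 / B \<epsilon>)) (hA - hB) kD (conv {hA..kA} {- hB..kB - 2 * hB} a c) \<delta>D GD \<epsilon>D"
    unfolding GD_def by (rule is_expansion_mult[OF A C]) (simp_all add: kD_def \<delta>D_def \<epsilon>D_def)
  then show "is_expansion \<epsilon>D (\<lambda>\<epsilon>. A \<epsilon> / B \<epsilon>) (hA - hB) kD (conv {hA..kA} {- hB..kB - 2 * hB} a c) \<delta>D GD \<epsilon>D"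
    by (simp add: is_expansion_mono_domain)
  show "\<epsilon>D \<le> e0" using inv(3) by (simp add: \<epsilon>D_def)
  show "B \<epsilon> \<noteq> 0" if "0 < \<epsilon>" "\<epsilon> \<le> \<epsilon>D" for \<epsilon>
    using inv(4) that by (simp add: \<epsilon>D_def)
qed

lemma is_expansion_divide_direct:
  assumes A: "is_expansion e0 A hA kA a \<delta>A GA \<epsilon>A"
    and B: "is_expansion e0 B hB kB b \<delta>B GB \<epsilon>B" and bh: "b hB \<noteq> 0"
  defines "c \<equiv> \<lambda>l. invc b hB (nat (l - - hB))"
    and "et \<equiv> (\<bar>b hB\<bar> / (2 * ((\<Sum>i\<in>{hB<..kB}. \<bar>b i\<bar> * \<epsilon>B powr (real_of_int (i - hB) - \<delta>B))
                               + GB * \<epsilon>B powr real_of_int (kB - hB)))) powr (1 / \<delta>B)"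
    and "kD \<equiv> min (kA - hB) (kB - 2 * hB + hA)"
    and "\<delta>D \<equiv> if kA - hB < kB - 2 * hB + hA then \<delta>A
               else if kA - hB = kB - 2 * hB + hA then min \<delta>A \<delta>B else \<delta>B"
    and "m \<equiv> min kA (hA + kB - hB)"
  defines "d \<equiv> conv {hA..kA} {- hB..kB - 2 * hB} a c"
    and "\<epsilon>D \<equiv> min \<epsilon>A (min \<epsilon>B et)"
  defines "GD \<equiv> inverse (\<bar>b hB\<bar> / 2) *
               ((\<Sum>(i,j)\<in>{(i,j). i \<in> {hB..kB} \<and> j \<in> {hA - hB..kD} \<and> m < i + j}.
                   \<bar>b i\<bar> * \<bar>d j\<bar> * \<epsilon>D powr (real_of_int (i + j - kD - hB) - \<delta>D))
                + (\<Sum>i\<in>{m<..kA}. \<bar>a i\<bar> * \<epsilon>D powr (real_of_int (i - hB - kD) - \<delta>D))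
                + GA * \<epsilon>D powr (real_of_int (kA - hB - kD) + \<delta>A - \<delta>D)
                + GB * (\<Sum>j = hA - hB..kD. \<bar>d j\<bar> * \<epsilon>D powr (real_of_int (j + kB - hB - kD) + \<delta>B - \<delta>D)))"
  shows "is_expansion \<epsilon>D (\<lambda>\<epsilon>. A \<epsilon> / B \<epsilon>) (hA - hB) kD d \<delta>D GD \<epsilon>D"
    and "\<epsilon>D \<le> e0" and "\<And>\<epsilon>. 0 < \<epsilon> \<Longrightarrow> \<epsilon> \<le> \<epsilon>D \<Longrightarrow> B \<epsilon> \<noteq> 0"
proof -
  note a = is_expansionD[OF A] and b = is_expansionD[OF B]
  note lb = expansion_lower_bound[OF B bh, folded et_def]
  note prec = combined_precision[OF a(2,3) b(2,3) \<delta>D_def[THEN meta_eq_to_obj_eq], folded kD_def]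
  have \<epsilon>D: "0 < \<epsilon>D" "\<epsilon>D \<le> \<epsilon>A" "\<epsilon>D \<le> \<epsilon>B" using a b lb(1) by (auto simp: \<epsilon>D_def)
  then show "\<epsilon>D \<le> e0" using a by simp
  have low: "\<bar>b hB\<bar> / 2 * \<epsilon> powr real_of_int hB \<le> \<bar>B \<epsilon>\<bar>" if "0 < \<epsilon>" "\<epsilon> \<le> \<epsilon>D" for \<epsilon>
    using lb(2) that by (simp add: \<epsilon>D_def)
  show nz: "B \<epsilon> \<noteq> 0" if "0 < \<epsilon>" "\<epsilon> \<le> \<epsilon>D" for \<epsilon>
    using lb(3) that by (simp add: \<epsilon>D_def)
  have m: "m = kD + hB" "hA \<le> m" "m \<le> kA" using a(1) b(1) by (auto simp: m_def kD_def)
  let ?q = "real_of_int kD + \<delta>D"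
  let ?P = "{(i,j). i \<in> {hB..kB} \<and> j \<in> {hA - hB..kD} \<and> m < i + j}"
  let ?K = "(\<Sum>(i,j)\<in>?P. \<bar>b i\<bar> * \<bar>d j\<bar> * \<epsilon>D powr (real_of_int (i + j) - (?q + real_of_int hB)))
      + (\<Sum>i\<in>{m<..kA}. \<bar>a i\<bar> * \<epsilon>D powr (real_of_int i - (?q + real_of_int hB)))
      + GA * \<epsilon>D powr (real_of_int kA + \<delta>A - (?q + real_of_int hB))
      + GB * (\<Sum>j = hA - hB..kD. \<bar>d j\<bar> * \<epsilon>D powr (real_of_int j + (real_of_int kB + \<delta>B) - (?q + real_of_int hB)))"
  \<comment> \<open>\<open>A - B \<cdot> D = N\<close>, since \<open>B \<cdot> D\<close> reproduces \<open>A\<close> up to degree \<open>m\<close>\<close>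
  let ?N = "\<lambda>\<epsilon>. - (\<Sum>(i,j)\<in>?P. b i * d j * \<epsilon> powr real_of_int (i + j)) + (\<Sum>i\<in>{m<..kA}. a i * \<epsilon> powr real_of_int i)
      + (A \<epsilon> - laurent hA kA a \<epsilon>) + - ((B \<epsilon> - laurent hB kB b \<epsilon>) * laurent (hA - hB) kD d \<epsilon>)"
  have oA: "order_bound \<epsilon>D GA (real_of_int kA + \<delta>A) (\<lambda>\<epsilon>. A \<epsilon> - laurent hA kA a \<epsilon>)"
    and oB: "order_bound \<epsilon>D GB (real_of_int kB + \<delta>B) (\<lambda>\<epsilon>. B \<epsilon> - laurent hB kB b \<epsilon>)"
    using a(7) b(7) \<epsilon>D by (auto intro: order_bound_mono)
  have "order_bound \<epsilon>D ?K (?q + real_of_int hB) ?N"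
    by (intro order_bound_add order_bound_uminus[THEN iffD2] order_bound_conv_tail order_bound_powr_sum
        order_bound_lower[OF oA] order_bound_mult_powr_sum[OF oB]) (use prec m a(4) b(4) in auto)
  then have quot: "order_bound \<epsilon>D (?K / (\<bar>b hB\<bar> / 2)) ?q (\<lambda>\<epsilon>. ?N \<epsilon> / B \<epsilon>)"
    by (rule order_bound_divide) (use bh low in auto)
  show "is_expansion \<epsilon>D (\<lambda>\<epsilon>. A \<epsilon> / B \<epsilon>) (hA - hB) kD d \<delta>D GD \<epsilon>D"
  proof (rule is_expansionI[OF quot])
    show "?K / (\<bar>b hB\<bar> / 2) \<le> GD" unfolding GD_def divide_inverse_commute
      by (intro mult_left_mono order_eq_refl) (simp_all add: algebra_simps)
  next
    fix \<epsilon> :: real assume \<epsilon>: "0 < \<epsilon>" "\<epsilon> \<le> \<epsilon>D"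
    have PBD: "laurent hB kB b \<epsilon> * laurent (hA - hB) kD d \<epsilon>
        = laurent hA m a \<epsilon> + (\<Sum>(i,j)\<in>?P. b i * d j * \<epsilon> powr real_of_int (i + j))"
      by (rule laurent_mult_conv_invc) (use bh \<epsilon> m in \<open>auto simp: d_def c_def m_def\<close>)
    have "{hA..kA} = {hA..m} \<union> {m<..kA}" using m by auto
    then have PA: "laurent hA kA a \<epsilon> = laurent hA m a \<epsilon> + (\<Sum>i\<in>{m<..kA}. a i * \<epsilon> powr real_of_int i)"
      by (simp only:) (rule sum.union_disjoint, auto)
    show "?N \<epsilon> / B \<epsilon> = A \<epsilon> / B \<epsilon> - laurent (hA - hB) kD d \<epsilon>"
      using PBD PA nz[OF \<epsilon>] by (simp add: field_simps)
  next
    show "0 < GD" unfolding GD_def using a(4) b(4) \<epsilon>D(1) bh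
      by (intro mult_pos_pos add_nonneg_nonneg add_nonneg_pos add_pos_nonneg sum_nonneg mult_nonneg_nonneg)
        (auto split: prod.split)
  qed (use a b prec \<epsilon>D in \<open>auto simp: kD_def\<close>)
qed

lemma ex_nonvanishing_domain:
  fixes E e0 :: real
  assumes "E \<le> e0" "\<And>\<epsilon>. 0 < \<epsilon> \<Longrightarrow> \<epsilon> \<le> E \<Longrightarrow> B \<epsilon> \<noteq> 0" "P E"
  shows "\<exists>e0'. E \<le> e0' \<and> e0' \<le> e0 \<and> (\<forall>\<epsilon>. 0 < \<epsilon> \<and> \<epsilon> \<le> e0' \<longrightarrow> B \<epsilon> \<noteq> 0) \<and> P e0'"
  using assms by blast

theorem lemma2:
  fixes \<epsilon>0 :: real
    and A B :: "real \<Rightarrow> real"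
    and hA kA hB kB :: int
    and a b :: "int \<Rightarrow> real"
    and \<delta>A GA \<epsilon>A \<delta>B GB \<epsilon>B c :: real
  assumes "0 < \<epsilon>0" and "\<epsilon>0 \<le> 1"
  shows
   "(is_expansion \<epsilon>0 A hA kA a \<delta>A GA \<epsilon>A \<longrightarrow>
      (\<forall>\<epsilon>. 0 < \<epsilon> \<and> \<epsilon> \<le> \<epsilon>A \<longrightarrow>
         \<bar>c * A \<epsilon> - (\<Sum>l=hA..kA. c * a l * \<epsilon> powr real_of_int l)\<bar>
           \<le> \<bar>c\<bar> * GA * \<epsilon> powr (real_of_int kA + \<delta>A)))
  \<and>
   (is_expansion \<epsilon>0 A hA kA a \<delta>A GA \<epsilon>A \<and> is_expansion \<epsilon>0 B hB kB b \<delta>B GB \<epsilon>B \<longrightarrow>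
     (let hC = min hA hB; kC = min kA kB;
          \<delta>C = (if kA < kB then \<delta>A else if kA = kB then min \<delta>A \<delta>B else \<delta>B);
          \<epsilon>C = min \<epsilon>A \<epsilon>B;
          GC = GA * \<epsilon>C powr (real_of_int kA + \<delta>A - real_of_int kC - \<delta>C)
             + (\<Sum>i\<in>{kC<..kA}. \<bar>a i\<bar> * \<epsilon>C powr (real_of_int (i - kC) - \<delta>C))
             + GB * \<epsilon>C powr (real_of_int kB + \<delta>B - real_of_int kC - \<delta>C)
             + (\<Sum>j\<in>{kC<..kB}. \<bar>b j\<bar> * \<epsilon>C powr (real_of_int (j - kC) - \<delta>C))
      in is_expansion \<epsilon>0 (\<lambda>\<epsilon>. A \<epsilon> + B \<epsilon>) hC kC (\<lambda>r. zext hA kA a r + zext hB kB b r) \<delta>C GC \<epsilon>C))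
  \<and>
   (is_expansion \<epsilon>0 A hA kA a \<delta>A GA \<epsilon>A \<and> is_expansion \<epsilon>0 B hB kB b \<delta>B GB \<epsilon>B \<longrightarrow>
     (let hC = hA + hB; kC = min (kA + hB) (kB + hA);
          cc = (\<lambda>r. \<Sum>(i,j)\<in>{(i,j). i \<in> {hA..kA} \<and> j \<in> {hB..kB} \<and> i + j = r}. a i * b j);
          \<delta>C = (if kA + hB < kB + hA then \<delta>A else if kA + hB = kB + hA then min \<delta>A \<delta>B else \<delta>B);
          \<epsilon>C = min \<epsilon>A \<epsilon>B;
          GC = (\<Sum>(i,j)\<in>{(i,j). i \<in> {hA..kA} \<and> j \<in> {hB..kB} \<and> kC < i + j}.
                   \<bar>a i\<bar> * \<bar>b j\<bar> * \<epsilon>C powr (real_of_int (i + j - kC) - \<delta>C))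
             + GA * (\<Sum>j=hB..kB. \<bar>b j\<bar> * \<epsilon>C powr (real_of_int (j + kA - kC) + \<delta>A - \<delta>C))
             + GB * (\<Sum>i=hA..kA. \<bar>a i\<bar> * \<epsilon>C powr (real_of_int (i + kB - kC) + \<delta>B - \<delta>C))
             + GA * GB * \<epsilon>C powr (real_of_int (kA + kB - kC) + \<delta>A + \<delta>B - \<delta>C)
      in is_expansion \<epsilon>0 (\<lambda>\<epsilon>. A \<epsilon> * B \<epsilon>) hC kC cc \<delta>C GC \<epsilon>C))
  \<and>
   (is_expansion \<epsilon>0 B hB kB b \<delta>B GB \<epsilon>B \<and> b hB \<noteq> 0 \<longrightarrow>
     (let hC = - hB; kC = kB - 2 * hB;
          cc = (\<lambda>l. invc b hB (nat (l - hC)));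
          \<delta>C = \<delta>B;
          et = (\<bar>b hB\<bar> / (2 * ((\<Sum>i\<in>{hB<..kB}. \<bar>b i\<bar> * \<epsilon>B powr (real_of_int (i - hB) - \<delta>B))
                               + GB * \<epsilon>B powr real_of_int (kB - hB)))) powr (1 / \<delta>B);
          \<epsilon>C = min \<epsilon>B et;
          GC = inverse (\<bar>b hB\<bar> / 2) *
               ((\<Sum>(i,j)\<in>{(i,j). i \<in> {hB..kB} \<and> j \<in> {hC..kC} \<and> kB - hB < i + j}.
                   \<bar>b i\<bar> * \<bar>cc j\<bar> * \<epsilon>C powr (real_of_int (i + j - kB + hB) - \<delta>B))
                + GB * (\<Sum>j=hC..kC. \<bar>cc j\<bar> * \<epsilon>C powr real_of_int (j + hB)))
      in \<exists>\<epsilon>0'. \<epsilon>C \<le> \<epsilon>0' \<and> \<epsilon>0' \<le> \<epsilon>0 \<and> (\<forall>\<epsilon>. 0 < \<epsilon> \<and> \<epsilon> \<le> \<epsilon>0' \<longrightarrow> B \<epsilon> \<noteq> 0) \<and>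
            is_expansion \<epsilon>0' (\<lambda>\<epsilon>. 1 / B \<epsilon>) hC kC cc \<delta>C GC \<epsilon>C \<and> cc hC \<noteq> 0))
  \<and>
   (is_expansion \<epsilon>0 A hA kA a \<delta>A GA \<epsilon>A \<and> is_expansion \<epsilon>0 B hB kB b \<delta>B GB \<epsilon>B \<and> b hB \<noteq> 0 \<longrightarrow>
     (let hC = - hB; kC = kB - 2 * hB;
          cc = (\<lambda>l. invc b hB (nat (l - hC)));
          \<delta>C = \<delta>B;
          et = (\<bar>b hB\<bar> / (2 * ((\<Sum>i\<in>{hB<..kB}. \<bar>b i\<bar> * \<epsilon>B powr (real_of_int (i - hB) - \<delta>B))
                               + GB * \<epsilon>B powr real_of_int (kB - hB)))) powr (1 / \<delta>B);
          \<epsilon>C = min \<epsilon>B et;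
          GC = inverse (\<bar>b hB\<bar> / 2) *
               ((\<Sum>(i,j)\<in>{(i,j). i \<in> {hB..kB} \<and> j \<in> {hC..kC} \<and> kB - hB < i + j}.
                   \<bar>b i\<bar> * \<bar>cc j\<bar> * \<epsilon>C powr (real_of_int (i + j - kB + hB) - \<delta>B))
                + GB * (\<Sum>j=hC..kC. \<bar>cc j\<bar> * \<epsilon>C powr real_of_int (j + hB)));
          hD = hA - hB; kD = min (kA - hB) (kB - 2 * hB + hA);
          d = (\<lambda>r. \<Sum>(i,j)\<in>{(i,j). i \<in> {hA..kA} \<and> j \<in> {hC..kC} \<and> i + j = r}. a i * cc j);
          \<delta>D = (if kA - hB < kB - 2 * hB + hA then \<delta>A
                else if kA - hB = kB - 2 * hB + hA then min \<delta>A \<delta>B else \<delta>B);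
          \<epsilon>D1 = min \<epsilon>A \<epsilon>C;
          GD1 = (\<Sum>(i,j)\<in>{(i,j). i \<in> {hA..kA} \<and> j \<in> {hC..kC} \<and> kD < i + j}.
                   \<bar>a i\<bar> * \<bar>cc j\<bar> * \<epsilon>D1 powr (real_of_int (i + j - kD) - \<delta>D))
             + GA * (\<Sum>j=hC..kC. \<bar>cc j\<bar> * \<epsilon>D1 powr (real_of_int (j + kA - kD) + \<delta>A - \<delta>D))
             + GC * (\<Sum>i=hA..kA. \<bar>a i\<bar> * \<epsilon>D1 powr (real_of_int (i + kC - kD) + \<delta>C - \<delta>D))
             + GA * GC * \<epsilon>D1 powr (real_of_int (kA + kC - kD) + \<delta>A + \<delta>C - \<delta>D);
          \<epsilon>D2 = min \<epsilon>A (min \<epsilon>B et);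
          m = min kA (hA + kB - hB);
          GD2 = inverse (\<bar>b hB\<bar> / 2) *
               ((\<Sum>(i,j)\<in>{(i,j). i \<in> {hB..kB} \<and> j \<in> {hD..kD} \<and> m < i + j}.
                   \<bar>b i\<bar> * \<bar>d j\<bar> * \<epsilon>D2 powr (real_of_int (i + j - kD - hB) - \<delta>D))
                + (\<Sum>i\<in>{m<..kA}. \<bar>a i\<bar> * \<epsilon>D2 powr (real_of_int (i - hB - kD) - \<delta>D))
                + GA * \<epsilon>D2 powr (real_of_int (kA - hB - kD) + \<delta>A - \<delta>D)
                + GB * (\<Sum>j=hD..kD. \<bar>d j\<bar> * \<epsilon>D2 powr (real_of_int (j + kB - hB - kD) + \<delta>B - \<delta>D)))
      in (\<exists>\<epsilon>0'. \<epsilon>D1 \<le> \<epsilon>0' \<and> \<epsilon>0' \<le> \<epsilon>0 \<and> (\<forall>\<epsilon>. 0 < \<epsilon> \<and> \<epsilon> \<le> \<epsilon>0' \<longrightarrow> B \<epsilon> \<noteq> 0) \<and>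
            is_expansion \<epsilon>0' (\<lambda>\<epsilon>. A \<epsilon> / B \<epsilon>) hD kD d \<delta>D GD1 \<epsilon>D1)
       \<and> (\<exists>\<epsilon>0'. \<epsilon>D2 \<le> \<epsilon>0' \<and> \<epsilon>0' \<le> \<epsilon>0 \<and> (\<forall>\<epsilon>. 0 < \<epsilon> \<and> \<epsilon> \<le> \<epsilon>0' \<longrightarrow> B \<epsilon> \<noteq> 0) \<and>
            is_expansion \<epsilon>0' (\<lambda>\<epsilon>. A \<epsilon> / B \<epsilon>) hD kD d \<delta>D GD2 \<epsilon>D2)))"
  unfolding Let_def
  apply (intro conjI impI; (elim conjE)?)
  subgoal using expansion_scale_remainder by blast
  subgoal by (rule is_expansion_add[OF _ _ refl refl refl refl])
  subgoal by (rule is_expansion_mult[OF _ _ refl refl refl refl])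
  subgoal premises p
    using is_expansion_inverse[OF p] by (intro ex_nonvanishing_domain conjI)
  subgoal premises p
    using is_expansion_divide_via_inverse[OF p] by (intro ex_nonvanishing_domain)
  subgoal premises p
    using is_expansion_divide_direct[OF p] by (intro ex_nonvanishing_domain)
  done

end
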